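(* For any $k\in\mathbb{N}$, there exist simple connected graphs $G$ and $G'$ (each with at least one edge) such that $\mathrm{diam}(G)-\omega'(G)=k$ and $\omega'(G')-\mathrm{diam}(G')=k$.
   Context: For distinct $u_1,u_2\in V(G)$, an edge $e$ separates $u_1,u_2$ if $e$ lies on every shortest $(u_1,u_2)$-path in $G$. The auxiliary graph $H(G)$ has vertex set $E(G)$, and distinct edges $e_1,e_2$ are adjacent in $H(G)$ iff some pair of distinct vertices of $G$ is separated by both $e_1$ and $e_2$. $\omega'(G)$ denotes the clique number of $H(G)$, and $\mathrm{diam}(G)$ is the diameter of $G$. *)

theory Defs
  imports Main
begin

definition simple_graph :: "'a set \<Rightarrow> 'a set set \<Rightarrow> bool" where
  "simple_graph V E \<longleftrightarrow> finite V \<and> (\<forall>e\<in>E. \<exists>u v. u \<noteq> v \<and> u \<in> V \<and> v \<in> V \<and> e = {u, v})"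

definition is_path :: "'a set \<Rightarrow> 'a set set \<Rightarrow> 'a list \<Rightarrow> bool" where
  "is_path V E p \<longleftrightarrow> p \<noteq> [] \<and> set p \<subseteq> V \<and> distinct p \<and>
     (\<forall>i. Suc i < length p \<longrightarrow> {p ! i, p ! Suc i} \<in> E)"

definition path_between :: "'a set \<Rightarrow> 'a set set \<Rightarrow> 'a \<Rightarrow> 'a \<Rightarrow> 'a list \<Rightarrow> bool" where
  "path_between V E u v p \<longleftrightarrow> is_path V E p \<and> hd p = u \<and> last p = v"

definition graph_connected :: "'a set \<Rightarrow> 'a set set \<Rightarrow> bool" where
  "graph_connected V E \<longleftrightarrow> (\<forall>u\<in>V. \<forall>v\<in>V. \<exists>p. path_between V E u v p)"

definition gdist :: "'a set \<Rightarrow> 'a set set \<Rightarrow> 'a \<Rightarrow> 'a \<Rightarrow> nat" where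
  "gdist V E u v = (LEAST n. \<exists>p. path_between V E u v p \<and> length p = Suc n)"

definition shortest_path :: "'a set \<Rightarrow> 'a set set \<Rightarrow> 'a \<Rightarrow> 'a \<Rightarrow> 'a list \<Rightarrow> bool" where
  "shortest_path V E u v p \<longleftrightarrow> path_between V E u v p \<and> length p = Suc (gdist V E u v)"

definition edge_on_path :: "'a set \<Rightarrow> 'a list \<Rightarrow> bool" where
  "edge_on_path e p \<longleftrightarrow> (\<exists>i. Suc i < length p \<and> e = {p ! i, p ! Suc i})"

definition separates :: "'a set \<Rightarrow> 'a set set \<Rightarrow> 'a set \<Rightarrow> 'a \<Rightarrow> 'a \<Rightarrow> bool" where
  "separates V E e u v \<longleftrightarrow> (\<forall>p. shortest_path V E u v p \<longrightarrow> edge_on_path e p)"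

text \<open>Adjacency in the auxiliary graph H(G) (vertex set E).\<close>

definition H_adj :: "'a set \<Rightarrow> 'a set set \<Rightarrow> 'a set \<Rightarrow> 'a set \<Rightarrow> bool" where
  "H_adj V E e1 e2 \<longleftrightarrow> e1 \<in> E \<and> e2 \<in> E \<and> e1 \<noteq> e2 \<and>
     (\<exists>u\<in>V. \<exists>v\<in>V. u \<noteq> v \<and> separates V E e1 u v \<and> separates V E e2 u v)"

definition H_clique :: "'a set \<Rightarrow> 'a set set \<Rightarrow> 'a set set \<Rightarrow> bool" where
  "H_clique V E C \<longleftrightarrow> C \<subseteq> E \<and> (\<forall>e1\<in>C. \<forall>e2\<in>C. e1 \<noteq> e2 \<longrightarrow> H_adj V E e1 e2)"

definition omega' :: "'a set \<Rightarrow> 'a set set \<Rightarrow> nat" where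
  "omega' V E = Max {card C | C. H_clique V E C}"

definition diam :: "'a set \<Rightarrow> 'a set set \<Rightarrow> nat" where
  "diam V E = Max {gdist V E u v | u v. u \<in> V \<and> v \<in> V}"

end

theory Submission
  imports Defs
begin

text \<open>In the star with \<open>n\<close> leaves two leaves are joined by a unique geodesic, which passes
  through both of their edges; hence all \<open>n\<close> edges are pairwise adjacent in \<open>H(G)\<close>, so
  \<open>\<omega>' = n\<close>, while the diameter is \<open>2\<close>. Conversely, replace every vertex of the path on
  \<open>D + 1\<close> vertices by two non-adjacent twins. The result has diameter \<open>D\<close>, and any two
  non-adjacent vertices are joined by two internally disjoint geodesics (one through each
  twin of every intermediate layer). So an edge separates only its own endpoints, \<open>H(G)\<close>
  has no edges and \<open>\<omega>' = 1\<close>. Stars with \<open>n = k + 2\<close> give \<open>\<omega>' - diam = k\<close>; twin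
  paths with \<open>D = k + 1\<close> give \<open>diam - \<omega>' = k\<close> for \<open>k \<ge> 1\<close>, and the star with
  \<open>n = 2\<close> handles \<open>k = 0\<close>.\<close>

section \<open>Geodesics and separating edges\<close>

lemma path_between_nonempty: "path_between V E u v p \<Longrightarrow> p \<noteq> []"
  by (simp add: path_between_def is_path_def)

lemma gdist_less_length: "path_between V E u v p \<Longrightarrow> gdist V E u v < length p"
proof -
  assume p: "path_between V E u v p"
  then have "length p = Suc (length p - 1)"
    using path_between_nonempty by fastforce
  with p have "gdist V E u v \<le> length p - 1"
    unfolding gdist_def by (blast intro: Least_le)
  then show ?thesis using path_between_nonempty[OF p] by (cases p) auto
qed

lemma shortest_path_exists:
  assumes "path_between V E u v q"
  obtains p where "shortest_path V E u v p"
proof -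
  have "length q = Suc (length q - 1)"
    using path_between_nonempty[OF assms] by simp
  with assms have "\<exists>n p. path_between V E u v p \<and> length p = Suc n" by blast
  then have "\<exists>p. path_between V E u v p \<and> length p = Suc (gdist V E u v)"
    unfolding gdist_def by (rule LeastI_ex)
  then show thesis using that by (auto simp: shortest_path_def)
qed

lemma gdist_geI:
  assumes "path_between V E u v q" "\<And>p. path_between V E u v p \<Longrightarrow> m < length p"
  shows "m \<le> gdist V E u v"
proof -
  obtain p where "shortest_path V E u v p" using shortest_path_exists[OF assms(1)] .
  then show ?thesis using assms(2) by (fastforce simp: shortest_path_def)
qed

lemma shortest_pathI:
  assumes "path_between V E u v p" "\<And>q. path_between V E u v q \<Longrightarrow> length p \<le> length q"
  shows "shortest_path V E u v p"
proof -
  obtain q where q: "shortest_path V E u v q" using shortest_path_exists[OF assms(1)] .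
  then have "length p \<le> Suc (gdist V E u v)"
    using assms(2)[of q] by (simp add: shortest_path_def)
  with gdist_less_length[OF assms(1)] assms(1) show ?thesis
    by (simp add: shortest_path_def)
qed

lemma is_path_rev: "is_path V E (rev p) \<longleftrightarrow> is_path V E p"
proof -
  have "{rev p ! i, rev p ! Suc i} \<in> E"
    if edges: "\<forall>j. Suc j < length p \<longrightarrow> {p ! j, p ! Suc j} \<in> E" and i: "Suc i < length p" for p i
  proof -
    have "{p ! (length p - Suc (Suc i)), p ! Suc (length p - Suc (Suc i))} \<in> E"
      using edges i by simp
    moreover have "Suc (length p - Suc (Suc i)) = length p - Suc i" using i by simp
    ultimately show ?thesis using i by (simp add: rev_nth insert_commute)
  qed
  from this[of p] this[of "rev p"] show ?thesis
    unfolding is_path_def by auto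
qed

lemma path_between_rev: "path_between V E v u (rev p) \<longleftrightarrow> path_between V E u v p"
  by (cases "p = []") (auto simp: path_between_def is_path_rev hd_rev last_rev, simp_all add: is_path_def)

lemma gdist_commute: "gdist V E u v = gdist V E v u"
proof -
  have "(\<exists>p. path_between V E u v p \<and> length p = Suc n) \<longleftrightarrow>
        (\<exists>p. path_between V E v u p \<and> length p = Suc n)" for n
    by (metis length_rev path_between_rev)
  then show ?thesis unfolding gdist_def by simp
qed

lemma shortest_path_rev: "shortest_path V E u v p \<Longrightarrow> shortest_path V E v u (rev p)"
  by (simp add: shortest_path_def path_between_rev gdist_commute)

lemma path_between_singleton: "u \<in> V \<Longrightarrow> path_between V E u u [u]"
  by (simp add: path_between_def is_path_def)

lemma path_between_edge:
  "u \<in> V \<Longrightarrow> v \<in> V \<Longrightarrow> u \<noteq> v \<Longrightarrow> {u, v} \<in> E \<Longrightarrow> path_between V E u v [u, v]"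
  by (auto simp: path_between_def is_path_def less_Suc_eq)

lemma path_between_two_edges:
  assumes "u \<in> V" "w \<in> V" "v \<in> V" "distinct [u, w, v]" "{u, w} \<in> E" "{w, v} \<in> E"
  shows "path_between V E u v [u, w, v]"
proof -
  have "{[u, w, v] ! i, [u, w, v] ! Suc i} \<in> E" if "Suc i < 3" for i
    using assms(5,6) that by (cases i) (auto simp: less_Suc_eq)
  then show ?thesis using assms(1-4) by (auto simp: path_between_def is_path_def)
qed

lemma path_between_length_ge2: "path_between V E u v p \<Longrightarrow> u \<noteq> v \<Longrightarrow> 2 \<le> length p"
  by (cases p) (auto simp: path_between_def is_path_def Suc_le_eq split: if_splits)

lemma path_between_length_ge3:
  assumes "path_between V E u v p" "u \<noteq> v" "{u, v} \<notin> E"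
  shows "3 \<le> length p"
proof (rule ccontr)
  assume "\<not> 3 \<le> length p"
  with path_between_length_ge2[OF assms(1,2)] have "length p = 2" by simp
  then obtain x y where "p = [x, y]"
    by (auto simp: numeral_2_eq_2 length_Suc_conv)
  with assms show False by (auto simp: path_between_def is_path_def)
qed

lemma separates_adjacent:
  assumes "u \<in> V" "v \<in> V" "u \<noteq> v" "{u, v} \<in> E" "separates V E e u v"
  shows "e = {u, v}"
proof -
  have "shortest_path V E u v [u, v]"
    by (rule shortest_pathI[OF path_between_edge[OF assms(1-4)]])
       (auto dest: path_between_length_ge2[OF _ assms(3)])
  then show ?thesis
    using assms(5) by (auto simp: separates_def edge_on_path_def)
qed

lemma edge_on_path_subset: "edge_on_path e p \<Longrightarrow> e \<subseteq> set p"
  by (auto simp: edge_on_path_def)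

lemma not_separates_if_disjoint_geodesics:
  assumes "shortest_path V E u v p" "shortest_path V E u v q" "set p \<inter> set q \<subseteq> {u, v}"
    "{u, v} \<notin> E"
  shows "\<not> separates V E e u v"
proof
  assume "separates V E e u v"
  then have "edge_on_path e p" "edge_on_path e q"
    using assms(1,2) by (auto simp: separates_def)
  then obtain i where i: "Suc i < length p" "e = {p ! i, p ! Suc i}"
    by (auto simp: edge_on_path_def)
  have p: "is_path V E p" using assms(1) by (simp add: shortest_path_def path_between_def)
  then have "e \<in> E" "p ! i \<noteq> p ! Suc i"
    using i by (auto simp: is_path_def nth_eq_iff_index_eq)
  moreover have "e \<subseteq> set p" "e \<subseteq> set q"
    using \<open>edge_on_path e p\<close> \<open>edge_on_path e q\<close> by (simp_all add: edge_on_path_subset)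
  ultimately have "p ! i \<in> {u, v}" "p ! Suc i \<in> {u, v}" "p ! i \<noteq> p ! Suc i"
    using i(2) assms(3) by blast+
  then have "e = {u, v}" using i(2) by auto
  with \<open>e \<in> E\<close> assms(4) show False by simp
qed

lemma omega'_eqI:
  assumes "H_clique V E C" "\<And>C'. H_clique V E C' \<Longrightarrow> card C' \<le> card C"
  shows "omega' V E = card C"
proof -
  have "{card C' | C'. H_clique V E C'} \<subseteq> {..card C}" using assms(2) by auto
  then have "finite {card C' | C'. H_clique V E C'}" by (rule finite_subset) simp
  then show ?thesis
    unfolding omega'_def using assms by (intro Max_eqI) auto
qed

lemma omega'_eq_1_if_disjoint_geodesics:
  assumes "E \<noteq> {}"
    and geodesics: "\<And>u v. u \<in> V \<Longrightarrow> v \<in> V \<Longrightarrow> u \<noteq> v \<Longrightarrow> {u, v} \<notin> E \<Longrightarrow>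
      \<exists>p q. shortest_path V E u v p \<and> shortest_path V E u v q \<and> set p \<inter> set q \<subseteq> {u, v}"
  shows "omega' V E = 1"
proof -
  have no_H_adj: "\<not> H_adj V E e1 e2" for e1 e2
  proof
    assume "H_adj V E e1 e2"
    then obtain u v where uv: "u \<in> V" "v \<in> V" "u \<noteq> v" and "e1 \<noteq> e2"
      and sep: "separates V E e1 u v" "separates V E e2 u v"
      unfolding H_adj_def by blast
    show False
    proof (cases "{u, v} \<in> E")
      case True
      then have "e1 = {u, v}" "e2 = {u, v}"
        using separates_adjacent[OF uv] sep by blast+
      with \<open>e1 \<noteq> e2\<close> show False by simp
    next
      case False
      then obtain p q where "shortest_path V E u v p" "shortest_path V E u v q"
        "set p \<inter> set q \<subseteq> {u, v}"
        using geodesics[OF uv] by blast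
      then have "\<not> separates V E e1 u v"
        using False by (rule not_separates_if_disjoint_geodesics)
      with sep(1) show False by contradiction
    qed
  qed
  have "card C \<le> 1" if "H_clique V E C" for C
  proof -
    have "\<forall>a\<in>C. \<forall>b\<in>C. a = b" using that no_H_adj unfolding H_clique_def by blast
    then show ?thesis by (cases "finite C") (auto simp: card_le_Suc0_iff_eq)
  qed
  moreover obtain e where "e \<in> E" using assms(1) by blast
  then have "H_clique V E {e}" by (simp add: H_clique_def)
  ultimately show ?thesis using omega'_eqI[of V E "{e}"] by simp
qed

lemma diam_eqI:
  assumes "\<And>u v. u \<in> V \<Longrightarrow> v \<in> V \<Longrightarrow> gdist V E u v \<le> d"
    "a \<in> V" "b \<in> V" "d \<le> gdist V E a b"
  shows "diam V E = d"
proof -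
  have "{gdist V E u v | u v. u \<in> V \<and> v \<in> V} \<subseteq> {..d}" using assms(1) by auto
  then have "finite {gdist V E u v | u v. u \<in> V \<and> v \<in> V}" by (rule finite_subset) simp
  moreover have "gdist V E a b = d" using assms(1)[OF assms(2,3)] assms(4) by simp
  ultimately show ?thesis
    unfolding diam_def using assms by (intro Max_eqI) auto
qed

section \<open>Stars\<close>

definition star_V :: "nat \<Rightarrow> nat set" where
  "star_V n = {..n}"

definition star_E :: "nat \<Rightarrow> nat set set" where
  "star_E n = (\<lambda>i. {0, i}) ` {1..n}"

lemma star_E_iff: "{x, y} \<in> star_E n \<longleftrightarrow> (x = 0 \<and> y \<in> {1..n}) \<or> (y = 0 \<and> x \<in> {1..n})"
  unfolding star_E_def by (auto simp: doubleton_eq_iff)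

lemma star_simple: "simple_graph (star_V n) (star_E n)"
proof -
  have "\<exists>u v. u \<noteq> v \<and> u \<in> star_V n \<and> v \<in> star_V n \<and> {0, i} = {u, v}" if "i \<in> {1..n}" for i
    using that by (intro exI[of _ 0] exI[of _ i]) (auto simp: star_V_def)
  then show ?thesis unfolding simple_graph_def star_E_def by (auto simp: star_V_def)
qed

lemma card_star_E: "card (star_E n) = n"
  unfolding star_E_def by (subst card_image) (auto simp: inj_on_def doubleton_eq_iff)

lemma star_E_nonempty: "1 \<le> n \<Longrightarrow> star_E n \<noteq> {}"
  using card_star_E[of n] by auto

lemma star_path_length_le_3:
  assumes "u \<in> star_V n" "v \<in> star_V n"
  obtains p where "path_between (star_V n) (star_E n) u v p" "length p \<le> 3"
proof -
  have center: "0 \<in> star_V n" by (simp add: star_V_def)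
  consider "u = v" | "u \<noteq> v" "u = 0 \<or> v = 0" | "u \<noteq> v" "u \<noteq> 0" "v \<noteq> 0" by blast
  then show thesis
  proof cases
    case 1
    with path_between_singleton[OF assms(1)] show thesis by (intro that[of "[u]"]) auto
  next
    case 2
    then have "{u, v} \<in> star_E n" using assms by (auto simp: star_E_iff star_V_def)
    with path_between_edge[OF assms 2(1)] show thesis by (intro that[of "[u, v]"]) auto
  next
    case 3
    then have "{u, 0} \<in> star_E n" "{0, v} \<in> star_E n" using assms by (auto simp: star_E_iff star_V_def)
    with path_between_two_edges[OF assms(1) center assms(2)] 3 show thesis
      by (intro that[of "[u, 0, v]"]) auto
  qed
qed

lemma star_connected: "graph_connected (star_V n) (star_E n)"
  unfolding graph_connected_def by (blast elim: star_path_length_le_3)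

lemma star_gdist_le_2:
  assumes "u \<in> star_V n" "v \<in> star_V n"
  shows "gdist (star_V n) (star_E n) u v \<le> 2"
proof -
  obtain p where "path_between (star_V n) (star_E n) u v p" "length p \<le> 3"
    using star_path_length_le_3[OF assms] .
  then show ?thesis using gdist_less_length by fastforce
qed

lemma star_gdist_leaves:
  assumes "i \<in> {1..n}" "j \<in> {1..n}" "i \<noteq> j"
  shows "gdist (star_V n) (star_E n) i j = 2"
proof -
  have "i \<in> star_V n" "j \<in> star_V n" using assms by (auto simp: star_V_def)
  moreover have "{i, j} \<notin> star_E n" using assms by (auto simp: star_E_iff)
  moreover obtain q where "path_between (star_V n) (star_E n) i j q"
    using star_path_length_le_3 calculation(1,2) .
  ultimately have "2 \<le> gdist (star_V n) (star_E n) i j"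
    using path_between_length_ge3[OF _ assms(3)] by (intro gdist_geI) fastforce+
  then show ?thesis using star_gdist_le_2 \<open>i \<in> star_V n\<close> \<open>j \<in> star_V n\<close> by (simp add: le_antisym)
qed

lemma star_shortest_path_leaves:
  assumes "i \<in> {1..n}" "j \<in> {1..n}" "i \<noteq> j" "shortest_path (star_V n) (star_E n) i j p"
  shows "p = [i, 0, j]"
proof -
  have "length p = 3"
    using assms(4) star_gdist_leaves[OF assms(1-3)] by (simp add: shortest_path_def)
  then obtain y where p: "p = [i, y, j]"
    using assms(4) by (auto simp: numeral_3_eq_3 length_Suc_conv shortest_path_def path_between_def)
  then have "{i, y} \<in> star_E n"
    using assms(4) unfolding shortest_path_def path_between_def is_path_def by force
  then show ?thesis using p assms(1) by (auto simp: star_E_iff)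
qed

lemma star_diam: "2 \<le> n \<Longrightarrow> diam (star_V n) (star_E n) = 2"
  using star_gdist_le_2 star_gdist_leaves[of 1 n 2]
  by (intro diam_eqI[of _ _ _ 1 2]) (simp_all add: star_V_def)

lemma star_H_clique: "H_clique (star_V n) (star_E n) (star_E n)"
  unfolding H_clique_def
proof (intro conjI subset_refl ballI impI)
  fix e1 e2 assume e: "e1 \<in> star_E n" "e2 \<in> star_E n" "e1 \<noteq> e2"
  then obtain i j where ij: "i \<in> {1..n}" "j \<in> {1..n}" "e1 = {0, i}" "e2 = {0, j}"
    unfolding star_E_def by blast
  with e(3) have "i \<noteq> j" by blast
  have "separates (star_V n) (star_E n) e1 i j \<and> separates (star_V n) (star_E n) e2 i j"
    unfolding separates_def
  proof (intro conjI allI impI)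
    fix p assume "shortest_path (star_V n) (star_E n) i j p"
    then have p: "p = [i, 0, j]" using star_shortest_path_leaves[OF ij(1,2) \<open>i \<noteq> j\<close>] by blast
    show "edge_on_path e1 p" unfolding edge_on_path_def p ij(3) by (rule exI[of _ 0]) auto
    show "edge_on_path e2 p" unfolding edge_on_path_def p ij(4) by (rule exI[of _ 1]) auto
  qed
  moreover have "i \<in> star_V n" "j \<in> star_V n" using ij by (auto simp: star_V_def)
  ultimately show "H_adj (star_V n) (star_E n) e1 e2"
    unfolding H_adj_def using e \<open>i \<noteq> j\<close> by blast
qed

lemma star_omega': "omega' (star_V n) (star_E n) = n"
proof -
  have "card C \<le> card (star_E n)" if "H_clique (star_V n) (star_E n) C" for C
    using that by (intro card_mono) (auto simp: H_clique_def star_E_def)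
  then show ?thesis using omega'_eqI[OF star_H_clique] card_star_E by simp
qed

section \<open>Paths with twinned vertices\<close>

text \<open>The path on \<open>D + 1\<close> vertices with every vertex replaced by two non-adjacent twins: vertex
  \<open>x\<close> lies in layer \<open>x div 2\<close>, and vertices are adjacent iff their layers are consecutive.\<close>

definition twin_path_V :: "nat \<Rightarrow> nat set" where
  "twin_path_V D = {..<2 * Suc D}"

definition twin_path_E :: "nat \<Rightarrow> nat set set" where
  "twin_path_E D = {{x, y} | x y. x \<in> twin_path_V D \<and> y \<in> twin_path_V D \<and> Suc (x div 2) = y div 2}"

lemma twin_path_V_iff: "x \<in> twin_path_V D \<longleftrightarrow> x div 2 \<le> D"
  unfolding twin_path_V_def by auto

lemma twin_path_E_iff:
  "{x, y} \<in> twin_path_E D \<longleftrightarrow> x \<in> twin_path_V D \<and> y \<in> twin_path_V D \<and>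
     (Suc (x div 2) = y div 2 \<or> Suc (y div 2) = x div 2)"
  unfolding twin_path_E_def by (auto simp: doubleton_eq_iff)

lemma twin_path_E_nonempty: "1 \<le> D \<Longrightarrow> twin_path_E D \<noteq> {}"
  using twin_path_E_iff[of 0 2 D] by (auto simp: twin_path_V_iff)

lemma twin_path_simple: "simple_graph (twin_path_V D) (twin_path_E D)"
proof -
  have "x \<noteq> y" if "Suc (x div 2) = y div 2" for x y :: nat using that by auto
  then show ?thesis unfolding simple_graph_def twin_path_E_def twin_path_V_def by blast
qed

lemma twin_path_layer_gap_less_length:
  assumes "path_between (twin_path_V D) (twin_path_E D) u v p"
  shows "v div 2 - u div 2 < length p"
proof -
  have p: "is_path (twin_path_V D) (twin_path_E D) p" "p \<noteq> []" "hd p = u" "last p = v"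
    using assms by (auto simp: path_between_def is_path_def)
  have "p ! i div 2 - p ! 0 div 2 \<le> i" if "i < length p" for i
    using that
  proof (induction i)
    case (Suc i)
    then have "{p ! i, p ! Suc i} \<in> twin_path_E D" using p(1) by (simp add: is_path_def)
    then have "p ! Suc i div 2 \<le> Suc (p ! i div 2)" by (auto simp: twin_path_E_iff)
    with Suc show ?case by simp
  qed simp
  from this[of "length p - 1"] p(2-4) have "v div 2 - u div 2 \<le> length p - 1"
    by (simp add: hd_conv_nth last_conv_nth)
  moreover have "0 < length p" using p(2) by simp
  ultimately show ?thesis by linarith
qed

lemma twin_path_monotone_path:
  assumes "u \<in> twin_path_V D" "v \<in> twin_path_V D" "u div 2 < v div 2" "c < 2"
  obtains p where "path_between (twin_path_V D) (twin_path_E D) u v p"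
    "length p = Suc (v div 2 - u div 2)" "set p \<subseteq> {u, v} \<union> {x. x mod 2 = c}"
proof -
  define a d where "a = u div 2" and "d = v div 2 - u div 2"
  define h where "h i = (if i = 0 then u else if i = d then v else 2 * (a + i) + c)" for i
  let ?p = "map h [0..<Suc d]"
  have half: "(2 * n + c) div 2 = n" and parity: "(2 * n + c) mod 2 = c" for n
    using assms(4) by auto
  have layer: "h i div 2 = a + i" if le: "i \<le> d" for i
  proof -
    consider "i = 0" | "i = d" | "0 < i" "i < d" using le by linarith
    then show ?thesis
    proof cases
      case 3
      then show ?thesis using half[of "a + i"] by (simp add: h_def)
    qed (use assms(3) in \<open>simp_all add: h_def a_def d_def\<close>)
  qed
  have "inj_on h {0..<Suc d}"
    by (rule inj_onI) (metis layer atLeastLessThan_iff less_Suc_eq_le add_left_cancel)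
  moreover have "h i \<in> twin_path_V D" if "i \<le> d" for i
    using layer[OF that] that assms(2,3) by (simp add: twin_path_V_iff a_def d_def)
  moreover have "{h i, h (Suc i)} \<in> twin_path_E D" if "i < d" for i
    using layer[of i] layer[of "Suc i"] calculation(2)[of i] calculation(2)[of "Suc i"] that
    by (simp add: twin_path_E_iff)
  moreover have "h 0 = u" "h d = v" using assms(3) by (auto simp: h_def d_def)
  ultimately have "path_between (twin_path_V D) (twin_path_E D) u v ?p"
    by (auto simp: path_between_def is_path_def distinct_map hd_map last_map simp del: upt_Suc)
  moreover have "length ?p = Suc (v div 2 - u div 2)" by (simp add: d_def del: upt_Suc)
  moreover have "h i \<in> {u, v} \<union> {x. x mod 2 = c}" for i
    using parity[of "a + i"] by (simp add: h_def)
  then have "set ?p \<subseteq> {u, v} \<union> {x. x mod 2 = c}" by auto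
  ultimately show thesis by (rule that)
qed

lemma twin_path_same_layer_path:
  assumes "u \<in> twin_path_V D" "v \<in> twin_path_V D" "u \<noteq> v" "u div 2 = v div 2" "1 \<le> D" "c < 2"
  obtains w where "path_between (twin_path_V D) (twin_path_E D) u v [u, w, v]" "w mod 2 = c"
proof -
  define a where "a = (if u div 2 < D then Suc (u div 2) else u div 2 - 1)"
  define w where "w = 2 * a + c"
  have "w div 2 = a" "w mod 2 = c" using assms(6) by (auto simp: w_def)
  moreover have "a \<le> D" "Suc a = u div 2 \<or> Suc (u div 2) = a"
    using assms(1,5) by (auto simp: a_def twin_path_V_iff)
  ultimately show thesis
    using assms(1-4) by (intro that path_between_two_edges) (auto simp: twin_path_E_iff twin_path_V_iff)
qed

lemma twin_path_disjoint_geodesics_ordered: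
  assumes "1 \<le> D" "u \<in> twin_path_V D" "v \<in> twin_path_V D" "u \<noteq> v" "u div 2 \<le> v div 2"
  shows "\<exists>p q. shortest_path (twin_path_V D) (twin_path_E D) u v p \<and>
    shortest_path (twin_path_V D) (twin_path_E D) u v q \<and> set p \<inter> set q \<subseteq> {u, v}"
proof (cases "u div 2 = v div 2")
  case True
  obtain w0 where w0: "path_between (twin_path_V D) (twin_path_E D) u v [u, w0, v]" "w0 mod 2 = 0"
    using twin_path_same_layer_path[OF assms(2-4) True assms(1), where c = 0] by auto
  obtain w1 where w1: "path_between (twin_path_V D) (twin_path_E D) u v [u, w1, v]" "w1 mod 2 = 1"
    using twin_path_same_layer_path[OF assms(2-4) True assms(1), where c = 1] by auto
  have "{u, v} \<notin> twin_path_E D" using True by (simp add: twin_path_E_iff)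
  have "shortest_path (twin_path_V D) (twin_path_E D) u v [u, w, v]"
    if "path_between (twin_path_V D) (twin_path_E D) u v [u, w, v]" for w
  proof (rule shortest_pathI[OF that])
    fix q assume "path_between (twin_path_V D) (twin_path_E D) u v q"
    then have "3 \<le> length q"
      using assms(4) \<open>{u, v} \<notin> twin_path_E D\<close> by (rule path_between_length_ge3)
    then show "length [u, w, v] \<le> length q" by simp
  qed
  moreover have "set [u, w0, v] \<inter> set [u, w1, v] \<subseteq> {u, v}" using w0(2) w1(2) by auto
  ultimately show ?thesis using w0(1) w1(1) by blast
next
  case False
  with assms(5) have less: "u div 2 < v div 2" by simp
  obtain p where p: "path_between (twin_path_V D) (twin_path_E D) u v p"
    "length p = Suc (v div 2 - u div 2)" "set p \<subseteq> {u, v} \<union> {x. x mod 2 = 0}"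
    using twin_path_monotone_path[OF assms(2,3) less, where c = 0] by auto
  obtain q where q: "path_between (twin_path_V D) (twin_path_E D) u v q"
    "length q = Suc (v div 2 - u div 2)" "set q \<subseteq> {u, v} \<union> {x. x mod 2 = 1}"
    using twin_path_monotone_path[OF assms(2,3) less, where c = 1] by auto
  have "shortest_path (twin_path_V D) (twin_path_E D) u v r"
    if "path_between (twin_path_V D) (twin_path_E D) u v r" "length r = Suc (v div 2 - u div 2)" for r
    using that twin_path_layer_gap_less_length by (intro shortest_pathI) (auto simp: Suc_le_eq)
  moreover have "set p \<inter> set q \<subseteq> {u, v}" using p(3) q(3) by force
  ultimately show ?thesis using p(1,2) q(1,2) by blast
qed

lemma twin_path_disjoint_geodesics:
  assumes "1 \<le> D" "u \<in> twin_path_V D" "v \<in> twin_path_V D" "u \<noteq> v"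
  shows "\<exists>p q. shortest_path (twin_path_V D) (twin_path_E D) u v p \<and>
    shortest_path (twin_path_V D) (twin_path_E D) u v q \<and> set p \<inter> set q \<subseteq> {u, v}"
proof (cases "u div 2 \<le> v div 2")
  case True
  then show ?thesis using twin_path_disjoint_geodesics_ordered assms by blast
next
  case False
  then obtain p q where "shortest_path (twin_path_V D) (twin_path_E D) v u p"
    "shortest_path (twin_path_V D) (twin_path_E D) v u q" "set p \<inter> set q \<subseteq> {v, u}"
    using twin_path_disjoint_geodesics_ordered[OF assms(1,3,2) assms(4)[symmetric]] by auto
  then show ?thesis by (intro exI[of _ "rev p"] exI[of _ "rev q"]) (auto simp: shortest_path_rev)
qed

lemma twin_path_path_length_le_ordered:
  assumes "2 \<le> D" "u \<in> twin_path_V D" "v \<in> twin_path_V D" "u div 2 \<le> v div 2"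
  shows "\<exists>p. path_between (twin_path_V D) (twin_path_E D) u v p \<and> length p \<le> Suc D"
proof -
  consider "u = v" | "u \<noteq> v" "u div 2 = v div 2" | "u div 2 < v div 2" using assms(4) by linarith
  then show ?thesis
  proof cases
    case 1
    then show ?thesis using path_between_singleton[OF assms(2)] assms(1) by (intro exI[of _ "[u]"]) auto
  next
    case 2
    then obtain w where "path_between (twin_path_V D) (twin_path_E D) u v [u, w, v]"
      using twin_path_same_layer_path[OF assms(2,3) _ _ _ zero_less_numeral] assms(1) by auto
    then show ?thesis using assms(1) by auto
  next
    case 3
    then obtain p where "path_between (twin_path_V D) (twin_path_E D) u v p"
      "length p = Suc (v div 2 - u div 2)"
      using twin_path_monotone_path[OF assms(2,3) _ zero_less_numeral] by blast
    then show ?thesis using assms(3) by (auto simp: twin_path_V_iff)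
  qed
qed

lemma twin_path_path_length_le:
  assumes "2 \<le> D" "u \<in> twin_path_V D" "v \<in> twin_path_V D"
  shows "\<exists>p. path_between (twin_path_V D) (twin_path_E D) u v p \<and> length p \<le> Suc D"
proof (cases "u div 2 \<le> v div 2")
  case True
  then show ?thesis using twin_path_path_length_le_ordered assms by blast
next
  case False
  then obtain p where "path_between (twin_path_V D) (twin_path_E D) v u p" "length p \<le> Suc D"
    using twin_path_path_length_le_ordered[OF assms(1,3,2)] by auto
  then show ?thesis by (intro exI[of _ "rev p"]) (simp add: path_between_rev)
qed

lemma twin_path_connected: "2 \<le> D \<Longrightarrow> graph_connected (twin_path_V D) (twin_path_E D)"
  unfolding graph_connected_def using twin_path_path_length_le by blast

lemma twin_path_diam:
  assumes "2 \<le> D"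
  shows "diam (twin_path_V D) (twin_path_E D) = D"
proof (rule diam_eqI)
  show "gdist (twin_path_V D) (twin_path_E D) u v \<le> D"
    if "u \<in> twin_path_V D" "v \<in> twin_path_V D" for u v
    using twin_path_path_length_le[OF assms that] gdist_less_length by fastforce
  show "0 \<in> twin_path_V D" "2 * D \<in> twin_path_V D" by (simp_all add: twin_path_V_iff)
  then obtain p where "path_between (twin_path_V D) (twin_path_E D) 0 (2 * D) p"
    using twin_path_path_length_le[OF assms] by blast
  then show "D \<le> gdist (twin_path_V D) (twin_path_E D) 0 (2 * D)"
    by (rule gdist_geI) (use twin_path_layer_gap_less_length in fastforce)
qed

lemma twin_path_omega':
  assumes "1 \<le> D"
  shows "omega' (twin_path_V D) (twin_path_E D) = 1"
  using twin_path_E_nonempty[OF assms] twin_path_disjoint_geodesics[OF assms]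
  by (intro omega'_eq_1_if_disjoint_geodesics) blast+

theorem proposition2:
  fixes k :: nat
  shows "(\<exists>(V :: nat set) E. simple_graph V E \<and> graph_connected V E \<and> E \<noteq> {} \<and>
            int (diam V E) - int (omega' V E) = int k) \<and>
         (\<exists>(V' :: nat set) E'. simple_graph V' E' \<and> graph_connected V' E' \<and> E' \<noteq> {} \<and>
            int (omega' V' E') - int (diam V' E') = int k)"
proof (intro conjI)
  show "\<exists>(V :: nat set) E. simple_graph V E \<and> graph_connected V E \<and> E \<noteq> {} \<and>
      int (diam V E) - int (omega' V E) = int k"
  proof (cases "k = 0")
    case True
    then show ?thesis
      using star_simple star_connected star_E_nonempty star_diam[of 2] star_omega'[of 2]
      by (intro exI[of _ "star_V 2"] exI[of _ "star_E 2"]) simp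
  next
    case False
    then show ?thesis
      using twin_path_simple twin_path_connected twin_path_E_nonempty
        twin_path_diam[of "k + 1"] twin_path_omega'[of "k + 1"]
      by (intro exI[of _ "twin_path_V (k + 1)"] exI[of _ "twin_path_E (k + 1)"]) simp
  qed
  show "\<exists>(V' :: nat set) E'. simple_graph V' E' \<and> graph_connected V' E' \<and> E' \<noteq> {} \<and>
      int (omega' V' E') - int (diam V' E') = int k"
    using star_simple star_connected star_E_nonempty star_diam[of "k + 2"] star_omega'[of "k + 2"]
    by (intro exI[of _ "star_V (k + 2)"] exI[of _ "star_E (k + 2)"]) simp
qed

end
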